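(* Let $(X,\oplus,\lceil,0)$ be an MV-algebra. For $x,y\in X$ let $(u_n)_{n\in\mathbb{N}}$ be the Fibonacci sequence attached to $x,y$, i.e. $u_0=x$, $u_1=y$, $u_{n+2}=u_n\oplus u_{n+1}$. Suppose that for all $x,y\in X$ this sequence is $2$-stationary, i.e. $u_n=u_2$ for all $n\geq 2$. Then $X$ is a Boolean algebra, i.e. $x\oplus x=x$ for all $x\in X$.
   Context: An MV-algebra $(X,\oplus,\lceil,0)$ is an abelian monoid $(X,\oplus,0)$ with a unary operation $\lceil$ such that for all $x,y\in X$: $x\oplus\lceil 0=\lceil 0$; $\lceil(\lceil x)=x$; $\lceil(\lceil x\oplus y)\oplus y=\lceil(\lceil y\oplus x)\oplus x$. An MV-algebra in which every element is idempotent ($x\oplus x=x$) is a Boolean algebra. *)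

theory Defs
  imports Main
begin

definition mv_algebra :: "'a set \<Rightarrow> ('a \<Rightarrow> 'a \<Rightarrow> 'a) \<Rightarrow> ('a \<Rightarrow> 'a) \<Rightarrow> 'a \<Rightarrow> bool" where
  "mv_algebra X pl ng z \<longleftrightarrow>
     z \<in> X \<and>
     (\<forall>x\<in>X. \<forall>y\<in>X. pl x y \<in> X) \<and>
     (\<forall>x\<in>X. ng x \<in> X) \<and>
     (\<forall>x\<in>X. \<forall>y\<in>X. \<forall>w\<in>X. pl (pl x y) w = pl x (pl y w)) \<and>
     (\<forall>x\<in>X. \<forall>y\<in>X. pl x y = pl y x) \<and>
     (\<forall>x\<in>X. pl x z = x) \<and>
     (\<forall>x\<in>X. pl x (ng z) = ng z) \<and>
     (\<forall>x\<in>X. ng (ng x) = x) \<and>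
     (\<forall>x\<in>X. \<forall>y\<in>X. pl (ng (pl (ng x) y)) y = pl (ng (pl (ng y) x)) x)"

fun mv_fib :: "('a \<Rightarrow> 'a \<Rightarrow> 'a) \<Rightarrow> 'a \<Rightarrow> 'a \<Rightarrow> nat \<Rightarrow> 'a" where
  "mv_fib pl x y 0 = x"
| "mv_fib pl x y (Suc 0) = y"
| "mv_fib pl x y (Suc (Suc n)) = pl (mv_fib pl x y n) (mv_fib pl x y (Suc n))"

end

theory Submission
  imports Defs
begin

lemma mv_fib_2: "mv_fib pl x y 2 = pl x y"
  by (simp add: numeral_2_eq_2)

lemma mv_fib_3: "mv_fib pl x y 3 = pl y (pl x y)"
  by (simp add: numeral_3_eq_3)

theorem proposition2p5:
  fixes X :: "'a set" and pl :: "'a \<Rightarrow> 'a \<Rightarrow> 'a" and ng :: "'a \<Rightarrow> 'a" and z :: 'a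
  assumes mv: "mv_algebra X pl ng z"
    and stat: "\<forall>x\<in>X. \<forall>y\<in>X. \<forall>n\<ge>2. mv_fib pl x y n = mv_fib pl x y 2"
  shows "\<forall>x\<in>X. pl x x = x"
proof
  fix x assume x: "x \<in> X"
  have z: "z \<in> X" and z_left_neutral: "pl z x = x"
    using mv x unfolding mv_algebra_def by auto
  \<comment> \<open>The sequence attached to 0, x reads 0, x, x, x \<oplus> x, ...\<close>
  have "mv_fib pl z x 3 = mv_fib pl z x 2"
    using stat[rule_format, OF z x, of 3] by simp
  then show "pl x x = x"
    by (simp add: mv_fib_2 mv_fib_3 z_left_neutral)
qed

end
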